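(* For a supersimple $2$-$(n,4,\lambda)$ design $\mathcal{D}=(\Omega,\mathcal{B})$, the following are equivalent: (i) for all $a,b,c,d\in\Omega$, $[a,b]^{[c,d]}=[a^{[c,d]},b^{[c,d]}]$; (ii) for all $a,b,c\in\Omega$, $[a,b]^{[b,c]}=[a^{[b,c]},c]$; (iii) for all $a,b,c\in\Omega$, $[b,c]=[a,b,c,a^{[b,c]}]$. In addition, if these conditions hold, then $\mathcal{L}_\infty(\mathcal{D})$ (for $\infty\in\Omega$) is a group of automorphisms of $\mathcal{D}$.
   Context: A $2$-$(n,4,\lambda)$ design $(\Omega,\mathcal{B})$: $n$ points, a multiset of $4$-subsets (lines), every $2$-subset in exactly $\lambda$ lines; supersimple: distinct lines meet in at most two points. For distinct $a,b$ with lines $\{a,b,a_i,b_i\}$ through them, $[a,b]:=(a,b)\prod_i(a_i,b_i)\in\operatorname{Sym}(\Omega)$; $[a,a]:=1$. Permutations act on the right ($x^g$), products composed left to right, and $g^h=h^{-1}gh$. Move sequence $[a_0,\dots,a_k]:=[a_0,a_1][a_1,a_2]\cdots[a_{k-1},a_k]$; $\mathcal{L}_\infty(\mathcal{D})$ is the set of all move sequences starting at $\infty$. *)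

theory Defs
  imports Main "HOL-Library.Multiset" "HOL-Combinatorics.Permutations"
begin

definition design :: "'a set \<Rightarrow> 'a set multiset \<Rightarrow> nat \<Rightarrow> nat \<Rightarrow> bool" where
  "design \<Omega> B n lam \<longleftrightarrow> finite \<Omega> \<and> card \<Omega> = n \<and>
     (\<forall>L. L \<in># B \<longrightarrow> L \<subseteq> \<Omega> \<and> card L = 4) \<and>
     (\<forall>x\<in>\<Omega>. \<forall>y\<in>\<Omega>. x \<noteq> y \<longrightarrow> size (filter_mset (\<lambda>L. {x, y} \<subseteq> L) B) = lam)"

definition supersimple :: "'a set multiset \<Rightarrow> bool" where
  "supersimple B \<longleftrightarrow> (\<forall>X Y. X \<in># B \<longrightarrow> Y \<in># B - {#X#} \<longrightarrow> card (X \<inter> Y) \<le> 2)"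

text \<open>The move [a,b] = (a,b) prod_i (a_i,b_i), written out pointwise (the transpositions
  are disjoint by supersimplicity). [a,a] = 1.\<close>
definition move :: "'a set multiset \<Rightarrow> 'a \<Rightarrow> 'a \<Rightarrow> 'a \<Rightarrow> 'a" where
  "move B a b x =
     (if a = b then x
      else if x = a then b
      else if x = b then a
      else if (\<exists>L. L \<in># B \<and> {a, b, x} \<subseteq> L)
        then (let L = (SOME L. L \<in># B \<and> {a, b, x} \<subseteq> L) in THE y. L - {a, b, x} = {y})
      else x)"

text \<open>Permutations act on the right, products composed left to right:
  x^(gh) = (x^g)^h, i.e. gh is the function h o g. Conjugation g^h = h^-1 g h.\<close>
definition conjp :: "('a \<Rightarrow> 'a) \<Rightarrow> ('a \<Rightarrow> 'a) \<Rightarrow> ('a \<Rightarrow> 'a)" where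
  "conjp g h = h \<circ> g \<circ> inv h"

fun moveseq :: "'a set multiset \<Rightarrow> 'a list \<Rightarrow> 'a \<Rightarrow> 'a" where
  "moveseq B [] = id"
| "moveseq B [x] = id"
| "moveseq B (x # y # r) = moveseq B (y # r) \<circ> move B x y"

definition Linf :: "'a set \<Rightarrow> 'a set multiset \<Rightarrow> 'a \<Rightarrow> ('a \<Rightarrow> 'a) set" where
  "Linf \<Omega> B pinf = {moveseq B (pinf # as) | as. set as \<subseteq> \<Omega>}"

definition automorphism :: "'a set \<Rightarrow> 'a set multiset \<Rightarrow> ('a \<Rightarrow> 'a) \<Rightarrow> bool" where
  "automorphism \<Omega> B g \<longleftrightarrow> g permutes \<Omega> \<and> image_mset (\<lambda>L. g ` L) B = B"

definition aut_group :: "'a set \<Rightarrow> 'a set multiset \<Rightarrow> ('a \<Rightarrow> 'a) set \<Rightarrow> bool" where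
  "aut_group \<Omega> B G \<longleftrightarrow> (\<forall>g\<in>G. automorphism \<Omega> B g) \<and> id \<in> G \<and>
     (\<forall>g\<in>G. \<forall>h\<in>G. h \<circ> g \<in> G) \<and> (\<forall>g\<in>G. inv g \<in> G)"

end

theory Submission
  imports Defs
begin

text \<open>By supersimplicity a move is a product of disjoint transpositions, hence an involution.
  Condition (ii) says that [b,c] conjugates [a,b] to [a',c] with a' = a^[b,c]; on a line
  {b,a,x,y}, where [a,b] swaps x and y, this makes x^[b,c], y^[b,c], a' and c collinear, so
  [b,c] maps lines through b to lines. Since moves are involutions, (ii) is the factorisation
  (iii) [b,c] = [w,b][b,c][c,w^[b,c]]; choosing w on a given line, which [w,b] carries to a
  line through b, shows that [b,c] maps every line to a line. So every move is an involutory
  automorphism, and conjugating a move by an automorphism gives the move of the image points,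
  which is (i). In L_\<infinity>, (iii) absorbs a move [x,y] multiplying a sequence ending in e
  into the sequence extended by x, y, e^[x,y]; inverses are the reversed sequences.\<close>

lemma move_sym: "move B a b = move B b a"
  by (rule ext) (auto simp: move_def insert_commute)

lemma move_self [simp]: "move B a a = id"
  by (rule ext) (simp add: move_def)

lemma move_left [simp]: "move B a b a = b" and move_right [simp]: "move B a b b = a"
  by (auto simp: move_def)

lemma moveseq_snoc:
  "xs \<noteq> [] \<Longrightarrow> moveseq B (xs @ [v]) = move B (last xs) v \<circ> moveseq B xs"
  by (induction xs rule: induct_list012) (simp_all add: comp_assoc)

lemma automorphism_comp:
  assumes "automorphism \<Omega> B g" "automorphism \<Omega> B h"
  shows "automorphism \<Omega> B (h \<circ> g)"
proof -
  have "image_mset (\<lambda>L. (h \<circ> g) ` L) B = image_mset (\<lambda>L. h ` L) (image_mset (\<lambda>L. g ` L) B)"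
    by (simp add: multiset.map_comp comp_def image_comp)
  then show ?thesis using assms unfolding automorphism_def by (simp only: permutes_compose)
qed

lemma image_mset_involution_eq:
  assumes inv: "\<And>x. f (f x) = x" and closed: "\<And>x. x \<in># M \<Longrightarrow> f x \<in># M"
    and mult: "\<And>x. count M x \<le> 1"
  shows "image_mset f M = M"
proof -
  have "count M x = count (mset_set (set_mset M)) x" for x
    using mult[of x] by (auto simp: count_mset_set' simp flip: count_greater_zero_iff)
  then have M: "M = mset_set (set_mset M)" by (rule multiset_eqI)
  have "f ` set_mset M \<subseteq> set_mset M" using closed by auto
  moreover have "set_mset M \<subseteq> f ` set_mset M"
  proof
    fix x assume "x \<in># M"
    then show "x \<in> f ` set_mset M" using closed[of x] inv[of x] by (metis image_eqI)
  qed
  moreover have "inj f" by (metis inv injI)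
  ultimately show ?thesis
    by (subst (1 2) M) (simp add: image_mset_mset_set inj_on_subset)
qed

lemma card_4_obtain:
  assumes "card L = 4" "b \<in> L"
  obtains a x y where "L = {b, a, x, y}" "distinct [b, a, x, y]"
proof -
  have "card (L - {b}) = 3" using assms by (simp add: card.infinite)
  then obtain a x y where axy: "L - {b} = {a, x, y}" "a \<noteq> x" "x \<noteq> y" "a \<noteq> y"
    by (auto simp: card_3_iff)
  then have "L = {b, a, x, y}" "b \<notin> {a, x, y}" using assms(2) by blast+
  then show ?thesis using that axy by auto
qed

lemma Linf_memI: "set as \<subseteq> \<Omega> \<Longrightarrow> moveseq B (pinf # as) \<in> Linf \<Omega> B pinf"
  unfolding Linf_def by blast

lemma Linf_memE:
  assumes "g \<in> Linf \<Omega> B pinf"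
  obtains as where "g = moveseq B (pinf # as)" "set as \<subseteq> \<Omega>"
  using assms unfolding Linf_def by blast

definition move_conj_law :: "'a set \<Rightarrow> 'a set multiset \<Rightarrow> bool" where
  "move_conj_law \<Omega> B \<longleftrightarrow> (\<forall>a\<in>\<Omega>. \<forall>b\<in>\<Omega>. \<forall>c\<in>\<Omega>. \<forall>d\<in>\<Omega>.
     conjp (move B a b) (move B c d) = move B (move B c d a) (move B c d b))"

definition adjacent_move_conj_law :: "'a set \<Rightarrow> 'a set multiset \<Rightarrow> bool" where
  "adjacent_move_conj_law \<Omega> B \<longleftrightarrow> (\<forall>a\<in>\<Omega>. \<forall>b\<in>\<Omega>. \<forall>c\<in>\<Omega>.
     conjp (move B a b) (move B b c) = move B (move B b c a) c)"

definition move_factor_law :: "'a set \<Rightarrow> 'a set multiset \<Rightarrow> bool" where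
  "move_factor_law \<Omega> B \<longleftrightarrow> (\<forall>a\<in>\<Omega>. \<forall>b\<in>\<Omega>. \<forall>c\<in>\<Omega>.
     move B b c = moveseq B [a, b, c, move B b c a])"

lemma move_conj_law_imp_adjacent: "move_conj_law \<Omega> B \<Longrightarrow> adjacent_move_conj_law \<Omega> B"
  unfolding move_conj_law_def adjacent_move_conj_law_def by (metis move_left)

locale supersimple_design =
  fixes \<Omega> :: "'a set" and B :: "'a set multiset" and n lam :: nat
  assumes design: "design \<Omega> B n lam" and supersimple: "supersimple B"
begin

lemma line_subset: "L \<in># B \<Longrightarrow> L \<subseteq> \<Omega>"
  and card_line: "L \<in># B \<Longrightarrow> card L = 4"
  using design unfolding design_def by blast+

lemma finite_line: "L \<in># B \<Longrightarrow> finite L"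
  using card_line by (metis card.infinite zero_neq_numeral)

lemma count_line_le_1: "count B L \<le> 1"
proof (rule ccontr)
  assume "\<not> count B L \<le> 1"
  then have "L \<in># B" and "L \<in># B - {#L#}"
    by (simp_all add: in_diff_count flip: count_greater_zero_iff)
  then show False
    using supersimple card_line[of L] unfolding supersimple_def by fastforce
qed

lemma line_eq_if_three_common:
  assumes "L \<in># B" "M \<in># B" "distinct [a, b, x]" "{a, b, x} \<subseteq> L" "{a, b, x} \<subseteq> M"
  shows "L = M"
proof (rule ccontr)
  assume "L \<noteq> M"
  then have "M \<in># B - {#L#}" using assms(2) by (simp add: in_diff_count)
  then have "card (L \<inter> M) \<le> 2" using supersimple assms(1) unfolding supersimple_def by blast
  moreover have "card {a, b, x} \<le> card (L \<inter> M)"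
    using assms finite_line by (intro card_mono) auto
  ultimately show False using assms(3) by simp
qed

lemma line_minus_three:
  assumes "L \<in># B" "distinct [a, b, x]" "{a, b, x} \<subseteq> L"
  obtains y where "L - {a, b, x} = {y}"
proof -
  have "card {a, b, x} = 3" using assms(2) by simp
  then have "card (L - {a, b, x}) = 1"
    using assms(3) card_line[OF assms(1)] by (simp add: card_Diff_subset)
  then show ?thesis using that by (metis One_nat_def card_1_singleton_iff)
qed

lemma move_eq_fourth_point:
  assumes "L \<in># B" "distinct [a, b, x]" "{a, b, x} \<subseteq> L" "y \<in> L" "y \<notin> {a, b, x}"
  shows "move B a b x = y"
proof -
  have ex: "\<exists>L. L \<in># B \<and> {a, b, x} \<subseteq> L" using assms by blast
  define L' where "L' = (SOME L. L \<in># B \<and> {a, b, x} \<subseteq> L)"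
  have "L' \<in># B \<and> {a, b, x} \<subseteq> L'" unfolding L'_def using someI_ex[OF ex] .
  then have "L' = L" using line_eq_if_three_common assms by blast
  moreover have "L - {a, b, x} = {y}"
    using line_minus_three[OF assms(1-3)] assms(4,5) by (metis DiffI singletonD)
  moreover have "move B a b x = (THE y. L' - {a, b, x} = {y})"
    using assms(2) ex unfolding move_def L'_def by auto
  ultimately show ?thesis by simp
qed

lemma move_off_lines:
  "distinct [a, b, x] \<Longrightarrow> \<nexists>L. L \<in># B \<and> {a, b, x} \<subseteq> L \<Longrightarrow> move B a b x = x"
  by (auto simp: move_def)

lemma move_cases:
  assumes "distinct [a, b, x]"
  obtains L where "L \<in># B" "{a, b, x} \<subseteq> L" "move B a b x \<in> L" "move B a b x \<notin> {a, b, x}"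
  | "\<nexists>L. L \<in># B \<and> {a, b, x} \<subseteq> L" "move B a b x = x"
proof (cases "\<exists>L. L \<in># B \<and> {a, b, x} \<subseteq> L")
  case True
  then obtain L where L: "L \<in># B" "{a, b, x} \<subseteq> L" by blast
  obtain y where "L - {a, b, x} = {y}" using line_minus_three[OF L(1) assms L(2)] .
  then have y: "y \<in> L" "y \<notin> {a, b, x}" by auto
  have "move B a b x = y" by (rule move_eq_fourth_point[OF L(1) assms L(2) y])
  then show ?thesis using that(1) L y by simp
next
  case False
  then show ?thesis using that(2) move_off_lines[OF assms] by blast
qed

lemma move_move [simp]: "move B a b (move B a b x) = x"
proof (cases "distinct [a, b, x]")
  case True
  then show ?thesis
  proof (cases rule: move_cases)
    case (1 L)
    then show ?thesis using True by (intro move_eq_fourth_point[OF 1(1)]) auto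
  qed simp
qed auto

lemma inv_move: "inv (move B a b) = move B a b"
  by (rule inv_unique_comp) (simp_all add: fun_eq_iff)

lemma move_eq_iff: "move B a b x = move B a b y \<longleftrightarrow> x = y"
  by (metis move_move)

lemma move_in:
  assumes "a \<in> \<Omega>" "b \<in> \<Omega>" "x \<in> \<Omega>"
  shows "move B a b x \<in> \<Omega>"
proof (cases "distinct [a, b, x]")
  case True
  then show ?thesis by (cases rule: move_cases) (use assms line_subset in auto)
qed (use assms in auto)

lemma move_permutes:
  assumes "a \<in> \<Omega>" "b \<in> \<Omega>"
  shows "move B a b permutes \<Omega>"
proof -
  have "move B a b x = x" if "x \<notin> \<Omega>" for x
    using assms that line_subset unfolding move_def by auto
  then show ?thesis unfolding permutes_def by (metis move_move)
qed

lemma move_image: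
  assumes inv: "\<And>x. g (g x) = x" and lines: "\<And>L. L \<in># B \<Longrightarrow> g ` L \<in># B"
  shows "move B (g a) (g b) (g x) = g (move B a b x)"
proof (cases "distinct [a, b, x]")
  case True
  have inj: "g u = g v \<longleftrightarrow> u = v" for u v by (metis inv)
  have g_distinct: "distinct [g a, g b, g x]" using True inj by auto
  show ?thesis using True
  proof (cases rule: move_cases)
    case (1 L)
    then show ?thesis
      using inj by (intro move_eq_fourth_point[OF lines[OF 1(1)] g_distinct]) auto
  next
    case 2
    have "\<nexists>M. M \<in># B \<and> {g a, g b, g x} \<subseteq> M"
    proof
      assume "\<exists>M. M \<in># B \<and> {g a, g b, g x} \<subseteq> M"
      then obtain M where "M \<in># B" "{g a, g b, g x} \<subseteq> M" by blast
      moreover have "u \<in> g ` M" if "g u \<in> M" for u using that inv by (metis image_eqI)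
      ultimately have "g ` M \<in># B" "{a, b, x} \<subseteq> g ` M" using lines by auto
      then show False using 2 by blast
    qed
    then show ?thesis using 2(2) move_off_lines[OF g_distinct] by simp
  qed
qed auto

lemma conjp_move_involution:
  assumes inv: "\<And>x. g (g x) = x" and lines: "\<And>L. L \<in># B \<Longrightarrow> g ` L \<in># B"
  shows "conjp (move B a b) g = move B (g a) (g b)"
proof -
  have "inv g = g" by (rule inv_unique_comp) (auto simp: inv)
  then show ?thesis unfolding conjp_def
    by (intro ext) (simp add: move_image[OF inv lines, symmetric] inv)
qed

lemma conjp_move_apply: "conjp (move B a b) (move B c d) x = move B c d (move B a b (move B c d x))"
  by (simp add: conjp_def inv_move)

lemma adjacent_law_apply:
  assumes "adjacent_move_conj_law \<Omega> B" "a \<in> \<Omega>" "b \<in> \<Omega>" "c \<in> \<Omega>"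
  shows "move B b c (move B a b (move B b c z)) = move B (move B b c a) c z"
  using assms unfolding adjacent_move_conj_law_def by (metis conjp_move_apply)

lemma adjacent_law_iff_factor_law:
  "adjacent_move_conj_law \<Omega> B \<longleftrightarrow> move_factor_law \<Omega> B"
proof -
  have "conjp (move B a b) (move B b c) = move B (move B b c a) c \<longleftrightarrow>
        move B b c = moveseq B [a, b, c, move B b c a]" for a b c
  proof -
    let ?a' = "move B b c a"
    have "conjp (move B a b) (move B b c) = move B ?a' c \<longleftrightarrow>
          (\<forall>z. move B b c (move B a b (move B b c z)) = move B ?a' c z)"
      by (simp add: fun_eq_iff conjp_move_apply)
    also have "\<dots> \<longleftrightarrow> (\<forall>w. move B b c w = move B ?a' c (move B b c (move B a b w)))"
    proof (intro iffI allI)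
      fix w assume "\<forall>z. move B b c (move B a b (move B b c z)) = move B ?a' c z"
      then show "move B b c w = move B ?a' c (move B b c (move B a b w))"
        by (metis move_move)
    next
      fix z assume "\<forall>w. move B b c w = move B ?a' c (move B b c (move B a b w))"
      then show "move B b c (move B a b (move B b c z)) = move B ?a' c z"
        by (metis move_move)
    qed
    also have "\<dots> \<longleftrightarrow> move B b c = moveseq B [a, b, c, ?a']"
      by (simp add: fun_eq_iff move_sym[of B c])
    finally show ?thesis .
  qed
  then show ?thesis unfolding adjacent_move_conj_law_def move_factor_law_def by simp
qed

lemma moveseq_rev_comp: "moveseq B (rev l) \<circ> moveseq B l = id"
proof (induction l rule: induct_list012)
  case (3 x y r)
  have "moveseq B (rev (x # y # r)) = move B y x \<circ> moveseq B (rev (y # r))"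
    using moveseq_snoc[of "rev (y # r)" B x] by (simp add: last_rev)
  then show ?case using "3.IH"(2) by (simp add: fun_eq_iff move_sym[of B y x])
qed simp_all

context
  assumes adjacent: "adjacent_move_conj_law \<Omega> B"
begin

lemma move_image_line_through:
  assumes "b \<in> \<Omega>" "c \<in> \<Omega>" "L \<in># B" "b \<in> L"
  shows "move B b c ` L \<in># B"
proof -
  let ?g = "move B b c"
  obtain a x y where L: "L = {b, a, x, y}" "distinct [b, a, x, y]"
    using card_4_obtain[OF card_line[OF assms(3)] assms(4)] .
  have "a \<in> \<Omega>" using L line_subset[OF assms(3)] by auto
  have "move B a b x = y" by (rule move_eq_fourth_point[OF assms(3)]) (use L in auto)
  then have fourth: "move B (?g a) c (?g x) = ?g y"
    using adjacent_law_apply[OF adjacent \<open>a \<in> \<Omega>\<close> assms(1,2), of "?g x"] by simp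
  have "distinct [?g b, ?g a, ?g x, ?g y]"
    using L(2) by (simp add: move_eq_iff del: move_left)
  then have distinct: "distinct [c, ?g a, ?g x, ?g y]" by simp
  then have "distinct [?g a, c, ?g x]" by auto
  then show ?thesis
  proof (cases rule: move_cases)
    case (1 M)
    have "?g ` L = set [c, ?g a, ?g x, ?g y]" using L by auto
    moreover have "set [c, ?g a, ?g x, ?g y] \<subseteq> M" using 1 fourth by auto
    moreover have "card (set [c, ?g a, ?g x, ?g y]) = card M"
      using distinct card_line[OF 1(1)] by (simp only: distinct_card) simp
    ultimately show ?thesis using 1(1) finite_line[OF 1(1)] by (metis card_subset_eq)
  next
    case 2
    then show ?thesis using fourth distinct by simp
  qed
qed

lemma move_image_line:
  assumes "b \<in> \<Omega>" "c \<in> \<Omega>" "L \<in># B"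
  shows "move B b c ` L \<in># B"
proof -
  obtain w where w: "w \<in> L" using card_line[OF assms(3)] by fastforce
  have "w \<in> \<Omega>" using w line_subset[OF assms(3)] by auto
  define w' where "w' = move B b c w"
  have "w' \<in> \<Omega>" unfolding w'_def using move_in \<open>w \<in> \<Omega>\<close> assms by blast
  have factor: "move B b c = move B c w' \<circ> move B b c \<circ> move B w b"
    using adjacent \<open>w \<in> \<Omega>\<close> assms(1,2)
    unfolding adjacent_law_iff_factor_law move_factor_law_def w'_def by (simp add: comp_assoc)
  have L1: "move B w b ` L \<in># B" "b \<in> move B w b ` L"
    using move_image_line_through[OF \<open>w \<in> \<Omega>\<close> assms(1,3) w] w by (auto intro: rev_image_eqI)
  then have L2: "move B b c ` move B w b ` L \<in># B" "c \<in> move B b c ` move B w b ` L"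
    using move_image_line_through[OF assms(1,2)] by (auto intro: rev_image_eqI)
  then have "move B c w' ` move B b c ` move B w b ` L \<in># B"
    using move_image_line_through[OF assms(2) \<open>w' \<in> \<Omega>\<close>] by blast
  then show ?thesis by (subst factor) (simp add: image_comp)
qed

lemma move_automorphism:
  assumes "b \<in> \<Omega>" "c \<in> \<Omega>"
  shows "automorphism \<Omega> B (move B b c)"
  unfolding automorphism_def
proof
  show "move B b c permutes \<Omega>" using move_permutes[OF assms] .
  show "image_mset ((`) (move B b c)) B = B"
    by (rule image_mset_involution_eq[OF _ _ count_line_le_1])
      (simp_all add: image_image move_image_line[OF assms])
qed

lemma adjacent_imp_move_conj_law: "move_conj_law \<Omega> B"
  unfolding move_conj_law_def
  using conjp_move_involution move_image_line by auto

lemma moveseq_automorphism: "set l \<subseteq> \<Omega> \<Longrightarrow> automorphism \<Omega> B (moveseq B l)"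
proof (induction l rule: induct_list012)
  case (3 x y r)
  then have "automorphism \<Omega> B (moveseq B (y # r) \<circ> move B x y)"
    by (intro automorphism_comp move_automorphism) auto
  then show ?case by (simp only: moveseq.simps)
qed (simp_all add: automorphism_def permutes_id)

end

context
  assumes factor: "move_factor_law \<Omega> B"
begin

lemma move_comp_moveseq:
  assumes "set xs \<subseteq> \<Omega>" "xs \<noteq> []" "x \<in> \<Omega>" "y \<in> \<Omega>"
  shows "move B x y \<circ> moveseq B xs = moveseq B (xs @ [x, y, move B x y (last xs)])"
proof -
  let ?e = "last xs"
  have "?e \<in> \<Omega>" using assms(1,2) by auto
  then have "move B x y = moveseq B [?e, x, y, move B x y ?e]"
    using factor assms(3,4) unfolding move_factor_law_def by blast
  then have "move B x y \<circ> moveseq B xs = moveseq B [?e, x, y, move B x y ?e] \<circ> moveseq B xs"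
    by (rule arg_cong[where f = "\<lambda>f. f \<circ> moveseq B xs"])
  also have "\<dots> = moveseq B (xs @ [x, y, move B x y ?e])"
    using moveseq_snoc[of xs B x] moveseq_snoc[of "xs @ [x]" B y]
      moveseq_snoc[of "xs @ [x, y]" B "move B x y ?e"] assms(2)
    by (simp add: comp_assoc)
  finally show ?thesis .
qed

lemma moveseq_comp_mem_Linf:
  assumes "pinf \<in> \<Omega>" "set l \<subseteq> \<Omega>" "g \<in> Linf \<Omega> B pinf"
  shows "moveseq B l \<circ> g \<in> Linf \<Omega> B pinf"
  using assms(2,3)
proof (induction l arbitrary: g rule: induct_list012)
  case (3 x y r)
  obtain as where g: "g = moveseq B (pinf # as)" "set as \<subseteq> \<Omega>"
    using "3.prems"(2) by (rule Linf_memE)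
  let ?as' = "as @ [x, y, move B x y (last (pinf # as))]"
  have "move B x y \<circ> g = moveseq B (pinf # ?as')"
    using move_comp_moveseq[of "pinf # as" x y] g assms(1) "3.prems"(1) by simp
  moreover have "set ?as' \<subseteq> \<Omega>"
    using g(2) assms(1) "3.prems"(1) move_in last_in_set[of "pinf # as"] by auto
  ultimately have "move B x y \<circ> g \<in> Linf \<Omega> B pinf" by (simp add: Linf_memI)
  moreover have "set (y # r) \<subseteq> \<Omega>" using "3.prems"(1) by simp
  ultimately have "moveseq B (y # r) \<circ> (move B x y \<circ> g) \<in> Linf \<Omega> B pinf"
    using "3.IH"(2) by blast
  then show ?case by (simp only: moveseq.simps comp_assoc)
qed simp_all

end

lemma aut_group_Linf:
  assumes "adjacent_move_conj_law \<Omega> B" "pinf \<in> \<Omega>"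
  shows "aut_group \<Omega> B (Linf \<Omega> B pinf)"
  unfolding aut_group_def
proof (intro conjI ballI)
  note factor = adjacent_law_iff_factor_law[THEN iffD1, OF assms(1)]
  have id_mem: "id \<in> Linf \<Omega> B pinf"
    using Linf_memI[of "[]" \<Omega> B pinf] by simp
  then show "id \<in> Linf \<Omega> B pinf" .
  fix g assume g_mem: "g \<in> Linf \<Omega> B pinf"
  then obtain as where g: "g = moveseq B (pinf # as)" and as: "set as \<subseteq> \<Omega>"
    by (rule Linf_memE)
  have pinf_as: "set (pinf # as) \<subseteq> \<Omega>" using as assms(2) by simp
  show "automorphism \<Omega> B g"
    unfolding g by (rule moveseq_automorphism[OF assms(1) pinf_as])
  have "inv g = moveseq B (rev (pinf # as))"
    unfolding g using moveseq_rev_comp[of "rev (pinf # as)"] moveseq_rev_comp[of "pinf # as"]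
    by (intro inv_unique_comp) simp_all
  also have "\<dots> = moveseq B (rev (pinf # as)) \<circ> id" by simp
  also have "\<dots> \<in> Linf \<Omega> B pinf"
    using pinf_as by (intro moveseq_comp_mem_Linf[OF factor assms(2) _ id_mem]) simp
  finally show "inv g \<in> Linf \<Omega> B pinf" .
  fix h assume "h \<in> Linf \<Omega> B pinf"
  then obtain bs where h: "h = moveseq B (pinf # bs)" and "set bs \<subseteq> \<Omega>"
    by (rule Linf_memE)
  then have "set (pinf # bs) \<subseteq> \<Omega>" using assms(2) by simp
  then show "h \<circ> g \<in> Linf \<Omega> B pinf"
    unfolding h by (rule moveseq_comp_mem_Linf[OF factor assms(2) _ g_mem])
qed

end

theorem lemma2p7:
  fixes \<Omega> :: "'a set" and B :: "'a set multiset" and n lam :: nat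
  assumes "design \<Omega> B n lam" and "supersimple B"
  shows "((\<forall>a\<in>\<Omega>. \<forall>b\<in>\<Omega>. \<forall>c\<in>\<Omega>. \<forall>d\<in>\<Omega>.
             conjp (move B a b) (move B c d) = move B (move B c d a) (move B c d b))
          \<longleftrightarrow> (\<forall>a\<in>\<Omega>. \<forall>b\<in>\<Omega>. \<forall>c\<in>\<Omega>.
             conjp (move B a b) (move B b c) = move B (move B b c a) c))
       \<and> ((\<forall>a\<in>\<Omega>. \<forall>b\<in>\<Omega>. \<forall>c\<in>\<Omega>.
             conjp (move B a b) (move B b c) = move B (move B b c a) c)
          \<longleftrightarrow> (\<forall>a\<in>\<Omega>. \<forall>b\<in>\<Omega>. \<forall>c\<in>\<Omega>.
             move B b c = moveseq B [a, b, c, move B b c a]))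
       \<and> ((\<forall>a\<in>\<Omega>. \<forall>b\<in>\<Omega>. \<forall>c\<in>\<Omega>. \<forall>d\<in>\<Omega>.
             conjp (move B a b) (move B c d) = move B (move B c d a) (move B c d b))
          \<longrightarrow> (\<forall>pinf\<in>\<Omega>. aut_group \<Omega> B (Linf \<Omega> B pinf)))"
proof -
  interpret supersimple_design \<Omega> B n lam using assms by unfold_locales
  have "move_conj_law \<Omega> B \<longleftrightarrow> adjacent_move_conj_law \<Omega> B"
    using move_conj_law_imp_adjacent adjacent_imp_move_conj_law by blast
  moreover have "adjacent_move_conj_law \<Omega> B \<longleftrightarrow> move_factor_law \<Omega> B"
    by (rule adjacent_law_iff_factor_law)
  moreover have "move_conj_law \<Omega> B \<longrightarrow> (\<forall>pinf\<in>\<Omega>. aut_group \<Omega> B (Linf \<Omega> B pinf))"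
    using move_conj_law_imp_adjacent aut_group_Linf by blast
  ultimately show ?thesis
    unfolding move_conj_law_def adjacent_move_conj_law_def move_factor_law_def by blast
qed

end
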